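(* Let $(C,\mathfrak p,\mathfrak d)$ be a regular $q$-cycle coalgebra. Then $\mathfrak p_{11}^1=\mathfrak d_{11}^1$.
   Context: $K$ is an algebraically closed field of characteristic $0$ and $n\ge2$. $C$ is the coalgebra dual to $K[y]/\langle y^n\rangle$: basis $x_0,\dots,x_{n-1}$, $\Delta(x_i)=\sum_{j+k=i}x_j\otimes x_k$, $\epsilon(x_i)=\delta_{i0}$; $C\otimes C$ has the tensor product coalgebra structure; Sweedler notation $\Delta(b)=b_{(1)}\otimes b_{(2)}$. For linear maps $\mathfrak p,\mathfrak d\colon C\otimes C\to C$ write $a\cdot b=\mathfrak p(a\otimes b)$, $a:b=\mathfrak d(a\otimes b)$, $\mathfrak p(x_i\otimes x_j)=\sum_{k=0}^{n-1}\mathfrak p_{ij}^kx_k$, $\mathfrak d(x_i\otimes x_j)=\sum_{k=0}^{n-1}\mathfrak d_{ij}^kx_k$. A triple $(C,\mathfrak p,\mathfrak d)$ with $\mathfrak p,\mathfrak d$ coalgebra morphisms is a regular $q$-magma coalgebra if there are coalgebra morphisms $a\otimes b\mapsto a^b$, $a\otimes b\mapsto a_b$ from $C\otimes C$ to $C$ with $a^{b_{(1)}}\cdot b_{(2)}=(a\cdot b_{(1)})^{b_{(2)}}=\epsilon(b)a$ and $(a:b_{(2)})_{b_{(1)}}=a_{b_{(2)}}:b_{(1)}=\epsilon(b)a$. It is a regular $q$-cycle coalgebra if moreover for all $a,b,c$: (1) $(a\cdot b_{(1)})\cdot(c:b_{(2)})=(a\cdot c_{(2)})\cdot(b\cdot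 c_{(1)})$; (2) $(a\cdot b_{(1)}):(c\cdot b_{(2)})=(a:c_{(2)})\cdot(b:c_{(1)})$; (3) $(a:b_{(1)}):(c:b_{(2)})=(a:c_{(2)}):(b\cdot c_{(1)})$. *)

theory Defs
  imports "HOL-Computational_Algebra.Polynomial"
begin

definition alg_closed :: "'k::field itself \<Rightarrow> bool" where
  "alg_closed _ \<longleftrightarrow> (\<forall>p :: 'k poly. degree p > 0 \<longrightarrow> (\<exists>x. poly p x = 0))"

text \<open>Elements of C = span(x_0,...,x_{n-1}) are coefficient vectors nat => 'k
  vanishing at indices >= n. A linear map C (x) C -> C is given by its structure
  constants f i j k = coefficient of x_k in f(x_i (x) x_j).\<close>

type_synonym 'k cvec = "nat \<Rightarrow> 'k"
type_synonym 'k bimap = "nat \<Rightarrow> nat \<Rightarrow> nat \<Rightarrow> 'k"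

definition inC :: "nat \<Rightarrow> 'k::field cvec \<Rightarrow> bool" where
  "inC n a \<longleftrightarrow> (\<forall>k\<ge>n. a k = 0)"

definition bas :: "nat \<Rightarrow> 'k::field cvec" where
  "bas i = (\<lambda>k. if k = i then 1 else 0)"

definition bapp :: "nat \<Rightarrow> 'k::field bimap \<Rightarrow> 'k cvec \<Rightarrow> 'k cvec \<Rightarrow> 'k cvec" where
  "bapp n f a b = (\<lambda>k. if k < n then (\<Sum>i<n. \<Sum>j<n. a i * b j * f i j k) else 0)"

definition ceps :: "'k::field cvec \<Rightarrow> 'k" where
  "ceps b = b 0"

text \<open>Sweedler sum: for F bilinear, F(b_(1), b_(2)) where
  Delta(x_j) = sum_{j1+j2=j} x_j1 (x) x_j2.\<close>
definition sweedler :: "nat \<Rightarrow> 'k::field cvec \<Rightarrow> ('k cvec \<Rightarrow> 'k cvec \<Rightarrow> 'k cvec) \<Rightarrow> 'k cvec" where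
  "sweedler n b F = (\<lambda>k. \<Sum>j<n. \<Sum>j1\<le>j. b j * F (bas j1) (bas (j - j1)) k)"

text \<open>f : C (x) C -> C is a coalgebra morphism (C (x) C with tensor product coalgebra
  structure), checked on the basis x_i (x) x_j:
  Delta(f(x_i (x) x_j)) = sum_{i1+i2=i, j1+j2=j} f(x_i1 (x) x_j1) (x) f(x_i2 (x) x_j2),
  epsilon(f(x_i (x) x_j)) = delta_{i0} delta_{j0}.\<close>
definition coalg_morph :: "nat \<Rightarrow> 'k::field bimap \<Rightarrow> bool" where
  "coalg_morph n f \<longleftrightarrow>
     (\<forall>i<n. \<forall>j<n. \<forall>k1<n. \<forall>k2<n.
        (if k1 + k2 < n then f i j (k1 + k2) else 0) =
        (\<Sum>i1\<le>i. \<Sum>j1\<le>j. f i1 j1 k1 * f (i - i1) (j - j1) k2)) \<and>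
     (\<forall>i<n. \<forall>j<n. f i j 0 = (if i = 0 \<and> j = 0 then 1 else 0))"

definition regular_q_magma :: "nat \<Rightarrow> 'k::field bimap \<Rightarrow> 'k bimap \<Rightarrow> bool" where
  "regular_q_magma n p d \<longleftrightarrow> coalg_morph n p \<and> coalg_morph n d \<and>
     (\<exists>up lo. coalg_morph n up \<and> coalg_morph n lo \<and>
        (\<forall>a b. inC n a \<longrightarrow> inC n b \<longrightarrow>
           sweedler n b (\<lambda>b1 b2. bapp n p (bapp n up a b1) b2) = (\<lambda>k. ceps b * a k) \<and>
           sweedler n b (\<lambda>b1 b2. bapp n up (bapp n p a b1) b2) = (\<lambda>k. ceps b * a k) \<and>
           sweedler n b (\<lambda>b1 b2. bapp n lo (bapp n d a b2) b1) = (\<lambda>k. ceps b * a k) \<and>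
           sweedler n b (\<lambda>b1 b2. bapp n d (bapp n lo a b2) b1) = (\<lambda>k. ceps b * a k)))"

definition regular_q_cycle :: "nat \<Rightarrow> 'k::field bimap \<Rightarrow> 'k bimap \<Rightarrow> bool" where
  "regular_q_cycle n p d \<longleftrightarrow> regular_q_magma n p d \<and>
     (\<forall>a b c. inC n a \<longrightarrow> inC n b \<longrightarrow> inC n c \<longrightarrow>
        sweedler n b (\<lambda>b1 b2. bapp n p (bapp n p a b1) (bapp n d c b2)) =
        sweedler n c (\<lambda>c1 c2. bapp n p (bapp n p a c2) (bapp n p b c1)) \<and>
        sweedler n b (\<lambda>b1 b2. bapp n d (bapp n p a b1) (bapp n p c b2)) =
        sweedler n c (\<lambda>c1 c2. bapp n p (bapp n d a c2) (bapp n d b c1)) \<and>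
        sweedler n b (\<lambda>b1 b2. bapp n d (bapp n d a b1) (bapp n d c b2)) =
        sweedler n c (\<lambda>c1 c2. bapp n d (bapp n d a c2) (bapp n p b c1)))"

end

(*
  Write alpha = f 1 0 1, beta = f 0 1 1 and gamma = f 1 1 1 for a coalgebra morphism
  f : C (x) C -> C.  Comultiplicativity makes f triangular (f(x_i (x) x_j) has no component
  along x_k for k > i + j) and determines the top-degree coefficients:
  f k 0 k = alpha^k and f k 1 (k+1) = (k+1) alpha^k beta.  One degree beyond x_(n-1) the
  same recursion gives n alpha^(n-1) beta = 0.  Regularity makes alpha invertible for both
  p and d, so in characteristic 0 both betas vanish; then on span(x_0, x_1) each of p, d is
  determined by its alpha and gamma.  Evaluating the cycle identities (1) and (3) on
  x_0, x_1 gives polynomial relations which force either gamma_p = gamma_d = 0 or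
  alpha_p = alpha_d = 1 and then gamma_p = gamma_d.
*)
theory Submission
  imports Defs
begin

lemma coalg_morphD_comult:
  assumes "coalg_morph n f" "i < n" "j < n" "k1 < n" "k2 < n"
  shows "(if k1 + k2 < n then f i j (k1 + k2) else 0) =
    (\<Sum>i1\<le>i. \<Sum>j1\<le>j. f i1 j1 k1 * f (i - i1) (j - j1) k2)"
  using assms unfolding coalg_morph_def by blast

lemma coalg_morphD_counit:
  assumes "coalg_morph n f" "i < n" "j < n"
  shows "f i j 0 = (if i = 0 \<and> j = 0 then 1 else 0)"
  using assms unfolding coalg_morph_def by blast

lemma sum_atMost_eq_first_two:
  fixes g :: "nat \<Rightarrow> 'a::comm_monoid_add"
  assumes "1 \<le> m" "\<And>i. 2 \<le> i \<Longrightarrow> i \<le> m \<Longrightarrow> g i = 0"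
  shows "(\<Sum>i\<le>m. g i) = g 0 + g 1"
proof -
  have "(\<Sum>i\<le>m. g i) = (\<Sum>i\<in>{0, 1}. g i)"
    by (rule sum.mono_neutral_right) (use assms in auto)
  then show ?thesis by simp
qed

lemma atMost_1: "{..1::nat} = {0, 1}"
  by auto

text \<open>Comultiplicativity gives \<open>f 0 0 k = (f 0 0 1)^k\<close> for \<open>k < n\<close>, and at
  \<open>k1 + k2 = n\<close> it says that \<open>f 0 0 1\<close> is nilpotent.\<close>
lemma coalg_morph_00_1_eq_0:
  assumes cm: "coalg_morph n f" and n: "2 \<le> n"
  shows "f 0 0 1 = 0"
proof -
  have pow: "f 0 0 k = f 0 0 1 ^ k" if "k < n" for k
    using that
  proof (induction k)
    case 0
    show ?case using coalg_morphD_counit[OF cm, of 0 0] n by simp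
  next
    case (Suc k)
    have "f 0 0 (1 + k) = f 0 0 1 * f 0 0 k"
      using coalg_morphD_comult[OF cm, of 0 0 1 k] Suc.prems by simp
    then show ?case using Suc by simp
  qed
  have "0 = f 0 0 1 * f 0 0 (n - 1)"
    using coalg_morphD_comult[OF cm, of 0 0 1 "n - 1"] n by simp
  also have "\<dots> = f 0 0 1 ^ n"
    using pow[of "n - 1"] n by (simp flip: power_Suc)
  finally show ?thesis by simp
qed

lemma coalg_morph_triangular:
  assumes cm: "coalg_morph n f" and n: "2 \<le> n"
  shows "k < n \<Longrightarrow> i < n \<Longrightarrow> j < n \<Longrightarrow> i + j < k \<Longrightarrow> f i j k = 0"
proof (induction k arbitrary: i j)
  case 0
  then show ?case by simp
next
  case (Suc k)
  have "(\<Sum>i1\<le>i. \<Sum>j1\<le>j. f i1 j1 1 * f (i - i1) (j - j1) k) = 0"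
  proof (intro sum.neutral ballI)
    fix i1 j1
    assume "i1 \<in> {..i}" "j1 \<in> {..j}"
    then consider "i1 = 0" "j1 = 0" | "(i - i1) + (j - j1) < k"
      using Suc.prems by fastforce
    then show "f i1 j1 1 * f (i - i1) (j - j1) k = 0"
      by cases (use coalg_morph_00_1_eq_0[OF cm n] Suc in auto)
  qed
  then show ?case
    using coalg_morphD_comult[OF cm, of i j 1 k] Suc.prems by simp
qed

lemma coalg_morph_diagonal:
  assumes cm: "coalg_morph n f" and n: "2 \<le> n"
  shows "k < n \<Longrightarrow> f k 0 k = f 1 0 1 ^ k"
proof (induction k)
  case 0
  show ?case using coalg_morphD_counit[OF cm, of 0 0] n by simp
next
  case (Suc k)
  have "f (Suc k) 0 (Suc k) = (\<Sum>i1\<le>Suc k. \<Sum>j1\<le>0. f i1 j1 1 * f (Suc k - i1) (0 - j1) k)"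
    using coalg_morphD_comult[OF cm, of "Suc k" 0 1 k] Suc.prems by simp
  also have "\<dots> = f 1 0 1 * f k 0 k"
    by (subst sum_atMost_eq_first_two)
      (use coalg_morph_triangular[OF cm n, of k] coalg_morph_00_1_eq_0[OF cm n] Suc.prems in auto)
  finally show ?case using Suc by simp
qed

lemma coalg_morph_subdiagonal_rec:
  assumes cm: "coalg_morph n f" and n: "2 \<le> n" and k: "Suc k < n"
  shows "(if Suc (Suc k) < n then f (Suc k) 1 (Suc (Suc k)) else 0) =
    f 1 0 1 * f k 1 (Suc k) + f 0 1 1 * f (Suc k) 0 (Suc k)"
proof -
  have "(if Suc (Suc k) < n then f (Suc k) 1 (Suc (Suc k)) else 0) =
      (\<Sum>i1\<le>Suc k. \<Sum>j1\<le>1. f i1 j1 1 * f (Suc k - i1) (1 - j1) (Suc k))"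
    using coalg_morphD_comult[OF cm, of "Suc k" 1 1 "Suc k", unfolded plus_1_eq_Suc] k by simp
  also have "\<dots> = f 1 0 1 * f k 1 (Suc k) + f 0 1 1 * f (Suc k) 0 (Suc k)"
    by (subst sum_atMost_eq_first_two)
      (use coalg_morph_triangular[OF cm n, of "Suc k"] coalg_morph_00_1_eq_0[OF cm n] k
        in \<open>auto simp: atMost_1\<close>)
  finally show ?thesis .
qed

lemma coalg_morph_subdiagonal:
  assumes cm: "coalg_morph n f" and n: "2 \<le> n"
  shows "Suc k < n \<Longrightarrow> f k 1 (Suc k) = of_nat (Suc k) * f 1 0 1 ^ k * f 0 1 1"
proof (induction k)
  case 0
  show ?case by simp
next
  case (Suc k)
  have "f (Suc k) 1 (Suc (Suc k)) = f 1 0 1 * f k 1 (Suc k) + f 0 1 1 * f (Suc k) 0 (Suc k)"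
    using coalg_morph_subdiagonal_rec[OF cm n, of k] Suc.prems by simp
  then show ?case
    using Suc coalg_morph_diagonal[OF cm n, of "Suc k"] by (simp add: algebra_simps)
qed

text \<open>The recursion behind \<open>coalg_morph_subdiagonal\<close>, taken one step beyond the
  top degree \<open>n - 1\<close>, yields \<open>0 = n * (f 1 0 1)^(n-1) * f 0 1 1\<close>.\<close>
lemma coalg_morph_01_1_eq_0:
  fixes f :: "'k::field_char_0 bimap"
  assumes cm: "coalg_morph n f" and n: "2 \<le> n" and "f 1 0 1 \<noteq> 0"
  shows "f 0 1 1 = 0"
proof -
  obtain m where m: "n = Suc (Suc m)"
    using n by (metis add_2_eq_Suc le_Suc_ex)
  have "0 = f 1 0 1 * f m 1 (Suc m) + f 0 1 1 * f (Suc m) 0 (Suc m)"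
    using coalg_morph_subdiagonal_rec[OF cm n, of m] m by simp
  also have "\<dots> = of_nat n * f 1 0 1 ^ Suc m * f 0 1 1"
    using coalg_morph_subdiagonal[OF cm n, of m] coalg_morph_diagonal[OF cm n, of "Suc m"] m
    by (simp add: algebra_simps)
  finally show ?thesis
    using assms(3) n by simp
qed

lemma bas_apply: "bas i k = (if k = i then 1 else 0)"
  by (simp add: bas_def)

lemma bas_self: "bas i i = 1"
  by (simp add: bas_def)

lemma inC_bas: "i < n \<Longrightarrow> inC n (bas i)"
  by (simp add: inC_def bas_apply)

lemma sum_bas_mult:
  assumes "j < n"
  shows "(\<Sum>i<n. bas j i * y i) = (y j :: 'k::field)"
proof -
  have "bas j i * y i = (if i = j then y i else 0)" for i
    by (simp add: bas_apply)
  then show ?thesis using assms by simp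
qed

lemma bapp_bas_bas:
  assumes "i < n" "j < n"
  shows "bapp n f (bas i) (bas j) = (\<lambda>k. if k < n then f i j k else 0)"
proof
  fix k :: nat
  have "(\<Sum>a<n. \<Sum>b<n. bas i a * bas j b * f a b k) = f i j k"
    using assms by (simp add: mult.assoc sum_bas_mult flip: sum_distrib_left)
  then show "bapp n f (bas i) (bas j) k = (if k < n then f i j k else 0)"
    by (simp add: bapp_def)
qed

lemma bapp_scale_left: "bapp n f (\<lambda>k. c * v k) w = (\<lambda>k. c * bapp n f v w k)"
  by (rule ext) (simp add: bapp_def sum_distrib_left ac_simps)

lemma bapp_scale_right: "bapp n f v (\<lambda>k. c * w k) = (\<lambda>k. c * bapp n f v w k)"
  by (rule ext) (simp add: bapp_def sum_distrib_left ac_simps)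

lemma bapp_zero_right: "bapp n f v (\<lambda>k. 0) = (\<lambda>k. 0)"
  by (rule ext) (simp add: bapp_def)

lemma sweedler_bas0:
  assumes "0 < n"
  shows "sweedler n (bas 0) F = F (bas 0) (bas 0)"
  using assms by (intro ext) (simp add: sweedler_def sum_bas_mult flip: sum_distrib_left)

lemma sweedler_bas1:
  assumes "1 < n"
  shows "sweedler n (bas 1) F = (\<lambda>k. F (bas 0) (bas 1) k + F (bas 1) (bas 0) k)"
  using assms by (intro ext) (simp add: sweedler_def sum_bas_mult atMost_1 flip: sum_distrib_left)

lemma coalg_morph_bapp_bas00:
  assumes cm: "coalg_morph n f" and n: "2 \<le> n"
  shows "bapp n f (bas 0) (bas 0) = bas 0"
proof
  fix k :: nat
  show "bapp n f (bas 0) (bas 0) k = bas 0 k"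
    using coalg_morphD_counit[OF cm, of 0 0] coalg_morph_triangular[OF cm n, of k 0 0] n
    by (auto simp: bapp_bas_bas bas_apply)
qed

lemma coalg_morph_bapp_bas10:
  assumes cm: "coalg_morph n f" and n: "2 \<le> n"
  shows "bapp n f (bas 1) (bas 0) = (\<lambda>k. f 1 0 1 * bas 1 k)"
proof
  fix k :: nat
  consider "k = 0" | "k = 1" | "1 + 0 < k"
    by linarith
  then show "bapp n f (bas 1) (bas 0) k = f 1 0 1 * bas 1 k"
    by cases
      (use coalg_morphD_counit[OF cm, of 1 0] coalg_morph_triangular[OF cm n, of k 1 0] n
        in \<open>simp_all add: bapp_bas_bas bas_apply\<close>)
qed

lemma coalg_morph_bapp_bas01:
  assumes cm: "coalg_morph n f" and n: "2 \<le> n" and "f 0 1 1 = 0"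
  shows "bapp n f (bas 0) (bas 1) = (\<lambda>k. 0)"
proof
  fix k :: nat
  consider "k = 0" | "k = 1" | "0 + 1 < k"
    by linarith
  then show "bapp n f (bas 0) (bas 1) k = 0"
    by cases
      (use assms coalg_morphD_counit[OF cm, of 0 1] coalg_morph_triangular[OF cm n, of k 0 1]
        in \<open>simp_all add: bapp_bas_bas\<close>)
qed

lemma coalg_morph_bapp_bas11:
  assumes cm: "coalg_morph n f" and n: "2 \<le> n" and "f 0 1 1 = 0"
  shows "bapp n f (bas 1) (bas 1) = (\<lambda>k. f 1 1 1 * bas 1 k)"
proof
  fix k :: nat
  have top: "f 1 1 2 = 0" if "2 < n"
    using coalg_morphD_comult[OF cm, of 1 1 1 1] coalg_morph_00_1_eq_0[OF cm n] assms(3) that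
    by (simp add: atMost_1 numeral_2_eq_2)
  consider "k = 0" | "k = 1" | "k = 2" | "1 + 1 < k"
    by linarith
  then show "bapp n f (bas 1) (bas 1) k = f 1 1 1 * bas 1 k"
    by cases
      (use top coalg_morphD_counit[OF cm, of 1 1] coalg_morph_triangular[OF cm n, of k 1 1] n
        in \<open>simp_all add: bapp_bas_bas bas_apply\<close>)
qed

text \<open>Regularity at \<open>a = x\<^sub>1\<close>, \<open>b = x\<^sub>0\<close> reads
  \<open>up 1 0 1 * p 1 0 1 = 1\<close> and \<open>lo 1 0 1 * d 1 0 1 = 1\<close>.\<close>
lemma regular_q_magma_10_1_nonzero:
  assumes "regular_q_magma n p d" and n: "2 \<le> n"
  shows "p 1 0 1 \<noteq> 0" "d 1 0 1 \<noteq> 0"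
proof -
  obtain up lo
    where cm: "coalg_morph n p" "coalg_morph n d" "coalg_morph n up" "coalg_morph n lo"
    and p_up: "sweedler n (bas 0) (\<lambda>b1 b2. bapp n p (bapp n up (bas 1) b1) b2) =
      (\<lambda>k. ceps (bas 0) * bas 1 k)"
    and d_lo: "sweedler n (bas 0) (\<lambda>b1 b2. bapp n d (bapp n lo (bas 1) b2) b1) =
      (\<lambda>k. ceps (bas 0) * bas 1 k)"
    using assms inC_bas[of 0 n] inC_bas[of 1 n] unfolding regular_q_magma_def by force
  have "up 1 0 1 * p 1 0 1 = 1"
    using fun_cong[OF p_up, of 1] n
    by (simp add: sweedler_bas0 coalg_morph_bapp_bas10[OF cm(3) n] bapp_scale_left
        coalg_morph_bapp_bas10[OF cm(1) n] ceps_def bas_self del: One_nat_def)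
  then show "p 1 0 1 \<noteq> 0" by auto
  have "lo 1 0 1 * d 1 0 1 = 1"
    using fun_cong[OF d_lo, of 1] n
    by (simp add: sweedler_bas0 coalg_morph_bapp_bas10[OF cm(4) n] bapp_scale_left
        coalg_morph_bapp_bas10[OF cm(2) n] ceps_def bas_self del: One_nat_def)
  then show "d 1 0 1 \<noteq> 0" by auto
qed

lemma regular_q_cycle_relations:
  fixes p d :: "'k::field bimap"
  assumes "regular_q_cycle n p d" and n: "2 \<le> n" and "p 0 1 1 = 0" "d 0 1 1 = 0"
  shows "p 1 0 1 * p 1 1 1 = p 1 0 1 ^ 2 * p 1 1 1"
    and "p 1 0 1 * d 1 0 1 * p 1 1 1 = p 1 0 1 * p 1 1 1"
    and "d 1 0 1 * d 1 1 1 = p 1 0 1 * d 1 0 1 * d 1 1 1"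
    and "d 1 0 1 ^ 2 * d 1 1 1 = d 1 0 1 * d 1 1 1"
    and "p 1 1 1 * (p 1 0 1 * d 1 1 1 + d 1 0 1 * p 1 1 1) = 2 * p 1 0 1 * p 1 1 1 ^ 2"
    and "2 * d 1 0 1 * d 1 1 1 ^ 2 = d 1 1 1 * (d 1 0 1 * p 1 1 1 + p 1 0 1 * d 1 1 1)"
proof -
  have cm: "coalg_morph n p" "coalg_morph n d"
    using assms(1) unfolding regular_q_cycle_def regular_q_magma_def by blast+
  have cyc1: "\<And>a b c. inC n a \<Longrightarrow> inC n b \<Longrightarrow> inC n c \<Longrightarrow>
      sweedler n b (\<lambda>b1 b2. bapp n p (bapp n p a b1) (bapp n d c b2)) =
      sweedler n c (\<lambda>c1 c2. bapp n p (bapp n p a c2) (bapp n p b c1))"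
    and cyc3: "\<And>a b c. inC n a \<Longrightarrow> inC n b \<Longrightarrow> inC n c \<Longrightarrow>
      sweedler n b (\<lambda>b1 b2. bapp n d (bapp n d a b1) (bapp n d c b2)) =
      sweedler n c (\<lambda>c1 c2. bapp n d (bapp n d a c2) (bapp n p b c1))"
    using assms(1) unfolding regular_q_cycle_def by blast+
  have x0: "inC n (bas 0)" and x1: "inC n (bas 1)"
    using n by (simp_all add: inC_bas)
  note eval = sweedler_bas0 sweedler_bas1 bapp_scale_left bapp_scale_right bapp_zero_right
    bas_self
    coalg_morph_bapp_bas00[OF cm(1) n] coalg_morph_bapp_bas10[OF cm(1) n]
    coalg_morph_bapp_bas01[OF cm(1) n assms(3)] coalg_morph_bapp_bas11[OF cm(1) n assms(3)]
    coalg_morph_bapp_bas00[OF cm(2) n] coalg_morph_bapp_bas10[OF cm(2) n]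
    coalg_morph_bapp_bas01[OF cm(2) n assms(4)] coalg_morph_bapp_bas11[OF cm(2) n assms(4)]
  show "p 1 0 1 * p 1 1 1 = p 1 0 1 ^ 2 * p 1 1 1"
    using fun_cong[OF cyc1[OF x1 x1 x0], of 1] n
    by (simp add: eval del: One_nat_def; auto simp: algebra_simps power2_eq_square)
  show "p 1 0 1 * d 1 0 1 * p 1 1 1 = p 1 0 1 * p 1 1 1"
    using fun_cong[OF cyc1[OF x1 x0 x1], of 1] n
    by (simp add: eval del: One_nat_def; auto simp: algebra_simps power2_eq_square)
  show "d 1 0 1 * d 1 1 1 = p 1 0 1 * d 1 0 1 * d 1 1 1"
    using fun_cong[OF cyc3[OF x1 x1 x0], of 1] n
    by (simp add: eval del: One_nat_def; auto simp: algebra_simps power2_eq_square)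
  show "d 1 0 1 ^ 2 * d 1 1 1 = d 1 0 1 * d 1 1 1"
    using fun_cong[OF cyc3[OF x1 x0 x1], of 1] n
    by (simp add: eval del: One_nat_def; auto simp: algebra_simps power2_eq_square)
  show "p 1 1 1 * (p 1 0 1 * d 1 1 1 + d 1 0 1 * p 1 1 1) = 2 * p 1 0 1 * p 1 1 1 ^ 2"
    using fun_cong[OF cyc1[OF x1 x1 x1], of 1] n
    by (simp add: eval del: One_nat_def; auto simp: algebra_simps power2_eq_square)
  show "2 * d 1 0 1 * d 1 1 1 ^ 2 = d 1 1 1 * (d 1 0 1 * p 1 1 1 + p 1 0 1 * d 1 1 1)"
    using fun_cong[OF cyc3[OF x1 x1 x1], of 1] n
    by (simp add: eval del: One_nat_def; auto simp: algebra_simps power2_eq_square)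
qed

lemma eq_of_cycle_relations:
  fixes \<alpha> \<alpha>' \<gamma> \<gamma>' :: "'a::idom"
  assumes "\<alpha> \<noteq> 0" "\<alpha>' \<noteq> 0"
    and "\<alpha> * \<gamma> = \<alpha> ^ 2 * \<gamma>" "\<alpha> * \<alpha>' * \<gamma> = \<alpha> * \<gamma>"
    and "\<alpha>' * \<gamma>' = \<alpha> * \<alpha>' * \<gamma>'" "\<alpha>' ^ 2 * \<gamma>' = \<alpha>' * \<gamma>'"
    and "\<gamma> * (\<alpha> * \<gamma>' + \<alpha>' * \<gamma>) = 2 * \<alpha> * \<gamma> ^ 2"
    and "2 * \<alpha>' * \<gamma>' ^ 2 = \<gamma>' * (\<alpha>' * \<gamma> + \<alpha> * \<gamma>')"
  shows "\<gamma> = \<gamma>'"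
proof (cases "\<gamma> = 0 \<and> \<gamma>' = 0")
  case False
  have "\<alpha> * \<gamma> * (\<alpha> - 1) = 0" "\<alpha>' * \<gamma>' * (\<alpha> - 1) = 0"
    using assms(3,5) by (simp_all add: algebra_simps power2_eq_square)
  then have \<alpha>: "\<alpha> = 1"
    using False assms(1,2) by auto
  have "\<alpha> * \<gamma> * (\<alpha>' - 1) = 0" "\<alpha>' * \<gamma>' * (\<alpha>' - 1) = 0"
    using assms(4,6) by (simp_all add: algebra_simps power2_eq_square)
  then have \<alpha>': "\<alpha>' = 1"
    using False assms(1,2) by auto
  have "\<gamma> * (\<gamma>' - \<gamma>) = 0" "\<gamma>' * (\<gamma>' - \<gamma>) = 0"
    using assms(7,8) by (simp_all add: \<alpha> \<alpha>' algebra_simps power2_eq_square)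
  then show ?thesis
    using False by auto
qed simp

theorem proposition2p3:
  fixes n :: nat and p d :: "'k::field_char_0 bimap"
  assumes "alg_closed TYPE('k)"
    and "n \<ge> 2"
    and "regular_q_cycle n p d"
  shows "p 1 1 1 = d 1 1 1"
proof -
  have magma: "regular_q_magma n p d" and cm: "coalg_morph n p" "coalg_morph n d"
    using assms(3) unfolding regular_q_cycle_def regular_q_magma_def by blast+
  have \<alpha>: "p 1 0 1 \<noteq> 0" "d 1 0 1 \<noteq> 0"
    using regular_q_magma_10_1_nonzero[OF magma assms(2)] by blast+
  have "p 0 1 1 = 0" "d 0 1 1 = 0"
    using coalg_morph_01_1_eq_0[OF cm(1) assms(2) \<alpha>(1)]
      coalg_morph_01_1_eq_0[OF cm(2) assms(2) \<alpha>(2)] .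
  from regular_q_cycle_relations[OF assms(3,2) this]
  show ?thesis
    by (rule eq_of_cycle_relations[OF \<alpha>])
qed

end
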